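(* Let $\delta\in(0,1)$. For all $x,y\in[\delta,1]$, \[ (-\ln x)-(-\ln y)+\frac{x-y}{y}\ \ge\ \frac{|\ln x-\ln y|^2}{2\ln(1/\delta)\vee 4}. \]
   Context: The term $\frac{x-y}{y}$ equals $-\nabla(-\ln)|_y\,(x-y)$. $a\vee b=\max(a,b)$. *)

theory Defs
  imports Complex_Main
begin

end

theory Submission
  imports Defs
begin

text \<open>With \<open>u = ln x - ln y\<close> the left-hand side is \<open>exp u - 1 - u\<close>, and \<open>\<bar>u\<bar> \<le> ln (1/\<delta>)\<close>.
  The Pade-type bound \<open>exp (-v) \<ge> (2 - v) / (2 + v)\<close> for \<open>v \<ge> 0\<close>, together with the
  quadratic Taylor bound for \<open>u \<ge> 0\<close>, gives \<open>exp u - 1 - u \<ge> u\<^sup>2 / (2 + \<bar>u\<bar>)\<close>, and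
  \<open>2 + \<bar>u\<bar> \<le> max (2 \<bar>u\<bar>) 4 \<le> max (2 ln (1/\<delta>)) 4\<close>.\<close>

lemma exp_mult_two_minus_le:
  fixes v :: real
  assumes "0 \<le> v"
  shows "(2 - v) * exp v \<le> 2 + v"
proof -
  define h where "h w = 2 + w - (2 - w) * exp w" for w :: real
  have h_deriv: "(h has_real_derivative (1 - (1 - w) * exp w)) (at w)" for w
    unfolding h_def by (auto intro!: derivative_eq_intros simp: algebra_simps)
  have "(1 - w) * exp w \<le> 1" for w :: real
  proof -
    have "(1 - w) * exp w \<le> exp (- w) * exp w"
      using exp_ge_add_one_self[of "- w"] by (intro mult_right_mono) auto
    also have "\<dots> = 1"
      by (simp add: exp_minus)
    finally show ?thesis .
  qed
  then have "h 0 \<le> h v"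
    using assms h_deriv by (intro DERIV_nonneg_imp_nondecreasing[of 0 v h]) (auto intro!: exI)
  then show ?thesis
    by (simp add: h_def)
qed

lemma exp_minus_one_minus_ge:
  fixes u :: real
  shows "u\<^sup>2 / (2 + \<bar>u\<bar>) \<le> exp u - 1 - u"
proof (cases "0 \<le> u")
  case True
  have "u\<^sup>2 / (2 + \<bar>u\<bar>) \<le> u\<^sup>2 / 2"
    by (intro divide_left_mono) auto
  also have "\<dots> \<le> exp u - 1 - u"
    using exp_lower_Taylor_quadratic[OF True] by simp
  finally show ?thesis .
next
  case False
  define v where "v = - u"
  have "0 < v"
    using False by (simp add: v_def)
  have "(2 - v) * exp v * exp u \<le> (2 + v) * exp u"
    using exp_mult_two_minus_le \<open>0 < v\<close> by (intro mult_right_mono) auto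
  then have "2 - v \<le> (2 + v) * exp u"
    by (simp add: v_def mult.assoc flip: exp_add)
  then have "v\<^sup>2 / (2 + v) \<le> exp u - 1 - u"
    using \<open>0 < v\<close> by (simp add: v_def field_simps power2_eq_square)
  then show ?thesis
    using False by (simp add: v_def)
qed

lemma bregman_neg_ln_eq:
  fixes x y :: real
  assumes "0 < x" and "0 < y"
  shows "(- ln x) - (- ln y) + (x - y) / y
           = exp (ln x - ln y) - 1 - (ln x - ln y)"
  using assms by (simp add: exp_diff diff_divide_distrib)

lemma abs_ln_diff_le:
  fixes \<delta> x y :: real
  assumes "0 < \<delta>" and "x \<in> {\<delta>..1}" and "y \<in> {\<delta>..1}"
  shows "\<bar>ln x - ln y\<bar> \<le> ln (1 / \<delta>)"
proof -
  have "ln \<delta> \<le> ln x" "ln x \<le> 0" "ln \<delta> \<le> ln y" "ln y \<le> 0"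
    using assms by auto
  moreover have "ln (1 / \<delta>) = - ln \<delta>"
    using assms by (simp add: ln_div)
  ultimately show ?thesis
    by (simp add: abs_le_iff)
qed

theorem lemma3:
  fixes \<delta> x y :: real
  assumes "0 < \<delta>" and "\<delta> < 1"
    and "x \<in> {\<delta>..1}" and "y \<in> {\<delta>..1}"
  shows "(- ln x) - (- ln y) + (x - y) / y
           \<ge> \<bar>ln x - ln y\<bar>^2 / max (2 * ln (1 / \<delta>)) 4"
proof -
  define u where "u = ln x - ln y"
  have "0 < x" and "0 < y"
    using assms by auto
  have "2 + \<bar>u\<bar> \<le> max (2 * ln (1 / \<delta>)) 4"
    using abs_ln_diff_le[OF \<open>0 < \<delta>\<close> assms(3,4)] by (simp add: u_def)
  then have "u\<^sup>2 / max (2 * ln (1 / \<delta>)) 4 \<le> u\<^sup>2 / (2 + \<bar>u\<bar>)"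
    by (intro divide_left_mono) auto
  also have "\<dots> \<le> exp u - 1 - u"
    by (rule exp_minus_one_minus_ge)
  also have "\<dots> = (- ln x) - (- ln y) + (x - y) / y"
    using bregman_neg_ln_eq[OF \<open>0 < x\<close> \<open>0 < y\<close>] by (simp add: u_def)
  finally show ?thesis
    by (simp add: u_def)
qed

end
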